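(* Let $v\in\Sigma^*$, let $u$ be a $v$-minimal word and $i\in\mathrm{supp}(u)$. The relation $\sigma_i$ on $\mathcal{I}_i$ is right-compatible: if $g\,\sigma_i\,f$, then $g\theta_i(a)\,\sigma_i\,f\theta_i(a)$ for every $a\in\Sigma^*$.
   Context: Let $\mathcal{A}=\langle Q,\Sigma,\delta\rangle$ be a synchronizing automaton with $n$ states $q_1,\dots,q_n$; write $q\cdot u$ for the action of $u\in\Sigma^*$ (extended to subsets) and $\mathrm{rk}(u)=|Q\cdot u|$. Each word acts linearly on $\mathbb{C}Q$ by $q\mapsto q\cdot u$, preserving $w^\perp=\{x:\langle x,q_1+\dots+q_n\rangle=0\}$; let $\rho:\Sigma^*\to\mathbb{M}_{n-1}(\mathbb{C})$ be the induced representation and $\mathcal{R}$ the $\mathbb{C}$-algebra generated by $\rho(\Sigma^* )$. Write $\mathcal{R}/\mathrm{Rad}(\mathcal{R})\cong\prod_{i=1}^k\mathbb{M}_{n_i}(\mathbb{C})$ (Jacobson radical, Wedderburn–Artin) and let $\theta_i:\Sigma^*\to\mathbb{M}_{n_i}(\mathbb{C})$ be $\rho$ followed by the quotient map and the $i$-th projection; $0_i$ is the zero matrix. The monoid $\theta_i(\Sigma^* )$ has a unique $0$-minimal ideal $\mathcal{I}_i$. The support of a word $z$ is $\mathrm{supp}(z)=\{i:\theta_i(z)\neq0_i\}$. For $v\in\Sigma^*$, a word $u\in\Sigma^*v\Sigma^*$ is $v$-minimal if $\mathrm{supp}(u)\neq\emptyset$ and there is no $z\in\Sigma^*v\Sigma^*$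 with $\emptyset\neq\mathrm{supp}(z)\subsetneq\mathrm{supp}(u)$. For such $u$, $i\in\mathrm{supp}(u)$ and $g\in\mathcal{I}_i$, a word $w$ $u$-represents $g$ if $w\in\Sigma^*u\Sigma^*$, $\theta_i(w)=g$, and either $g=0_i$ or $\mathrm{rk}(w)$ is minimum among all words $w'\in\Sigma^*u\Sigma^*$ with $\theta_i(w')=g$. Define the relation $\sigma_i$ on $\mathcal{I}_i$ by $g\,\sigma_i\,f$ iff either $g=f$, or there exist words $w_1,w_2$ that $u$-represent $g$ and $f$ respectively with $|Q\cdot w_1\cap Q\cdot w_2|>1$. *)

theory Defs
  imports "Jordan_Normal_Form.Matrix"
begin

text \<open>Automaton: states are 0..<n (state q_j is j-1), alphabet Sigma, transition delta.\<close>

definition act :: "(nat \<Rightarrow> 'a \<Rightarrow> nat) \<Rightarrow> nat \<Rightarrow> 'a list \<Rightarrow> nat" where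
  "act \<delta> q w = foldl \<delta> q w"

definition img :: "nat \<Rightarrow> (nat \<Rightarrow> 'a \<Rightarrow> nat) \<Rightarrow> 'a list \<Rightarrow> nat set" where
  "img n \<delta> w = (\<lambda>q. act \<delta> q w) ` {0..<n}"

definition rk :: "nat \<Rightarrow> (nat \<Rightarrow> 'a \<Rightarrow> nat) \<Rightarrow> 'a list \<Rightarrow> nat" where
  "rk n \<delta> w = card (img n \<delta> w)"

definition synchronizing_automaton :: "nat \<Rightarrow> 'a set \<Rightarrow> (nat \<Rightarrow> 'a \<Rightarrow> nat) \<Rightarrow> bool" where
  "synchronizing_automaton n \<Sigma> \<delta> \<longleftrightarrow>
     0 < n \<and> finite \<Sigma> \<and> (\<forall>q<n. \<forall>a\<in>\<Sigma>. \<delta> q a < n) \<and>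
     (\<exists>w\<in>lists \<Sigma>. rk n \<delta> w = 1)"

text \<open>The representation on the orthogonal complement of q_1+...+q_n, written as an
 (n-1)x(n-1) matrix w.r.t. the basis b_j = q_j - q_n, using row vectors (x maps to x * rho w),
 so that rho (u @ v) = rho u * rho v.\<close>

definition rho :: "nat \<Rightarrow> (nat \<Rightarrow> 'a \<Rightarrow> nat) \<Rightarrow> 'a list \<Rightarrow> complex mat" where
  "rho n \<delta> w = mat (n - 1) (n - 1)
     (\<lambda>(j, k). (if act \<delta> j w = k then 1 else 0) - (if act \<delta> (n - 1) w = k then 1 else 0))"

inductive_set gen_alg :: "nat \<Rightarrow> complex mat set \<Rightarrow> complex mat set" for d G where
  gen: "x \<in> G \<Longrightarrow> x \<in> gen_alg d G"
| zero: "0\<^sub>m d d \<in> gen_alg d G"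
| one: "1\<^sub>m d \<in> gen_alg d G"
| add: "x \<in> gen_alg d G \<Longrightarrow> y \<in> gen_alg d G \<Longrightarrow> x + y \<in> gen_alg d G"
| smult: "x \<in> gen_alg d G \<Longrightarrow> c \<cdot>\<^sub>m x \<in> gen_alg d G"
| mult: "x \<in> gen_alg d G \<Longrightarrow> y \<in> gen_alg d G \<Longrightarrow> x * y \<in> gen_alg d G"

definition algR :: "nat \<Rightarrow> 'a set \<Rightarrow> (nat \<Rightarrow> 'a \<Rightarrow> nat) \<Rightarrow> complex mat set" where
  "algR n \<Sigma> \<delta> = gen_alg (n - 1) (rho n \<delta> ` lists \<Sigma>)"

definition left_ideal :: "nat \<Rightarrow> complex mat set \<Rightarrow> complex mat set \<Rightarrow> bool" where
  "left_ideal d R L \<longleftrightarrow> L \<subseteq> R \<and> 0\<^sub>m d d \<in> L \<and> (\<forall>x\<in>L. \<forall>y\<in>L. x + y \<in> L) \<and>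
     (\<forall>x\<in>L. - x \<in> L) \<and> (\<forall>r\<in>R. \<forall>x\<in>L. r * x \<in> L)"

definition maximal_left_ideal :: "nat \<Rightarrow> complex mat set \<Rightarrow> complex mat set \<Rightarrow> bool" where
  "maximal_left_ideal d R L \<longleftrightarrow> left_ideal d R L \<and> L \<noteq> R \<and>
     (\<forall>L'. left_ideal d R L' \<and> L \<subseteq> L' \<and> L' \<noteq> R \<longrightarrow> L' = L)"

definition jacobson_radical :: "nat \<Rightarrow> complex mat set \<Rightarrow> complex mat set" where
  "jacobson_radical d R = {x \<in> R. \<forall>L. maximal_left_ideal d R L \<longrightarrow> x \<in> L}"

text \<open>Wedderburn--Artin data: Phi x i is the i-th component (i < k) of the image of x under
  R -> R/Rad(R) ~= prod_{i<k} M_{ns i}(C); i.e. Phi is a surjective unital algebra homomorphism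
  R -> prod_i M_{ns i}(C) with kernel Rad(R).\<close>

definition wedderburn_artin ::
  "nat \<Rightarrow> complex mat set \<Rightarrow> nat \<Rightarrow> (nat \<Rightarrow> nat) \<Rightarrow> (complex mat \<Rightarrow> nat \<Rightarrow> complex mat) \<Rightarrow> bool" where
  "wedderburn_artin d R k ns \<Phi> \<longleftrightarrow>
     (\<forall>i<k. 0 < ns i) \<and>
     (\<forall>x\<in>R. \<forall>i<k. \<Phi> x i \<in> carrier_mat (ns i) (ns i)) \<and>
     (\<forall>x\<in>R. \<forall>y\<in>R. \<forall>i<k. \<Phi> (x + y) i = \<Phi> x i + \<Phi> y i) \<and>
     (\<forall>x\<in>R. \<forall>c. \<forall>i<k. \<Phi> (c \<cdot>\<^sub>m x) i = c \<cdot>\<^sub>m \<Phi> x i) \<and>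
     (\<forall>x\<in>R. \<forall>y\<in>R. \<forall>i<k. \<Phi> (x * y) i = \<Phi> x i * \<Phi> y i) \<and>
     (\<forall>i<k. \<Phi> (1\<^sub>m d) i = 1\<^sub>m (ns i)) \<and>
     (\<forall>f. (\<forall>i<k. f i \<in> carrier_mat (ns i) (ns i)) \<longrightarrow> (\<exists>x\<in>R. \<forall>i<k. \<Phi> x i = f i)) \<and>
     (\<forall>x\<in>R. (\<forall>i<k. \<Phi> x i = 0\<^sub>m (ns i) (ns i)) \<longleftrightarrow> x \<in> jacobson_radical d R)"

definition theta :: "nat \<Rightarrow> (nat \<Rightarrow> 'a \<Rightarrow> nat) \<Rightarrow> (complex mat \<Rightarrow> nat \<Rightarrow> complex mat) \<Rightarrow> nat \<Rightarrow> 'a list \<Rightarrow> complex mat" where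
  "theta n \<delta> \<Phi> i w = \<Phi> (rho n \<delta> w) i"

definition monoid_ideal :: "'b::times set \<Rightarrow> 'b set \<Rightarrow> bool" where
  "monoid_ideal S I \<longleftrightarrow> I \<noteq> {} \<and> I \<subseteq> S \<and> (\<forall>s\<in>S. \<forall>x\<in>I. s * x \<in> I \<and> x * s \<in> I)"

definition zero_minimal_ideal :: "'b::times set \<Rightarrow> 'b \<Rightarrow> 'b set \<Rightarrow> bool" where
  "zero_minimal_ideal S z I \<longleftrightarrow> monoid_ideal S I \<and> I \<noteq> {z} \<and>
     (\<forall>J. monoid_ideal S J \<and> J \<subseteq> I \<longrightarrow> J = {z} \<or> J = I)"

definition idealI :: "'a set \<Rightarrow> nat \<Rightarrow> (nat \<Rightarrow> 'a \<Rightarrow> nat) \<Rightarrow> (nat \<Rightarrow> nat) \<Rightarrow> (complex mat \<Rightarrow> nat \<Rightarrow> complex mat) \<Rightarrow> nat \<Rightarrow> complex mat set" where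
  "idealI \<Sigma> n \<delta> ns \<Phi> i =
     (THE I. zero_minimal_ideal (theta n \<delta> \<Phi> i ` lists \<Sigma>) (0\<^sub>m (ns i) (ns i)) I)"

definition factors :: "'a set \<Rightarrow> 'a list \<Rightarrow> 'a list set" where
  "factors \<Sigma> v = {x @ v @ y | x y. x \<in> lists \<Sigma> \<and> y \<in> lists \<Sigma>}"

definition supp :: "nat \<Rightarrow> (nat \<Rightarrow> 'a \<Rightarrow> nat) \<Rightarrow> nat \<Rightarrow> (nat \<Rightarrow> nat) \<Rightarrow> (complex mat \<Rightarrow> nat \<Rightarrow> complex mat) \<Rightarrow> 'a list \<Rightarrow> nat set" where
  "supp n \<delta> k ns \<Phi> z = {i. i < k \<and> theta n \<delta> \<Phi> i z \<noteq> 0\<^sub>m (ns i) (ns i)}"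

definition v_minimal :: "'a set \<Rightarrow> nat \<Rightarrow> (nat \<Rightarrow> 'a \<Rightarrow> nat) \<Rightarrow> nat \<Rightarrow> (nat \<Rightarrow> nat) \<Rightarrow> (complex mat \<Rightarrow> nat \<Rightarrow> complex mat) \<Rightarrow> 'a list \<Rightarrow> 'a list \<Rightarrow> bool" where
  "v_minimal \<Sigma> n \<delta> k ns \<Phi> v u \<longleftrightarrow>
     u \<in> factors \<Sigma> v \<and> supp n \<delta> k ns \<Phi> u \<noteq> {} \<and>
     \<not> (\<exists>z\<in>factors \<Sigma> v. supp n \<delta> k ns \<Phi> z \<noteq> {} \<and> supp n \<delta> k ns \<Phi> z \<subset> supp n \<delta> k ns \<Phi> u)"

definition u_represents :: "'a set \<Rightarrow> nat \<Rightarrow> (nat \<Rightarrow> 'a \<Rightarrow> nat) \<Rightarrow> (nat \<Rightarrow> nat) \<Rightarrow> (complex mat \<Rightarrow> nat \<Rightarrow> complex mat) \<Rightarrow> 'a list \<Rightarrow> nat \<Rightarrow> 'a list \<Rightarrow> complex mat \<Rightarrow> bool" where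
  "u_represents \<Sigma> n \<delta> ns \<Phi> u i w g \<longleftrightarrow>
     w \<in> factors \<Sigma> u \<and> theta n \<delta> \<Phi> i w = g \<and>
     (g = 0\<^sub>m (ns i) (ns i) \<or>
      (\<forall>w'\<in>factors \<Sigma> u. theta n \<delta> \<Phi> i w' = g \<longrightarrow> rk n \<delta> w \<le> rk n \<delta> w'))"

definition sigma_rel :: "'a set \<Rightarrow> nat \<Rightarrow> (nat \<Rightarrow> 'a \<Rightarrow> nat) \<Rightarrow> (nat \<Rightarrow> nat) \<Rightarrow> (complex mat \<Rightarrow> nat \<Rightarrow> complex mat) \<Rightarrow> 'a list \<Rightarrow> nat \<Rightarrow> complex mat \<Rightarrow> complex mat \<Rightarrow> bool" where
  "sigma_rel \<Sigma> n \<delta> ns \<Phi> u i g f \<longleftrightarrow>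
     g \<in> idealI \<Sigma> n \<delta> ns \<Phi> i \<and> f \<in> idealI \<Sigma> n \<delta> ns \<Phi> i \<and>
     (g = f \<or> (\<exists>w1 w2. u_represents \<Sigma> n \<delta> ns \<Phi> u i w1 g \<and> u_represents \<Sigma> n \<delta> ns \<Phi> u i w2 f \<and>
                 card (img n \<delta> w1 \<inter> img n \<delta> w2) > 1))"

end

theory Submission
  imports Defs
begin

text \<open>
  The monoid \<open>\<Theta> = \<theta>\<^sub>i(\<Sigma>\<^sup>*)\<close> linearly spans the full matrix algebra \<open>M\<^sub>n\<^sub>i(\<complex>)\<close>, hence is prime:
  \<open>A \<Theta> B \<noteq> 0\<close> for nonzero \<open>A, B\<close>. So the \<open>0\<close>-minimal ideal \<open>\<I>\<^sub>i\<close> is unique and generated by any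
  nonzero element, and if \<open>w\<close> \<open>u\<close>-represents \<open>h \<noteq> 0\<close> then \<open>h = \<theta>\<^sub>i(p w s w' q)\<close> for any factor
  \<open>w'\<close> of \<open>\<Sigma>\<^sup>*u\<Sigma>\<^sup>*\<close> with \<open>\<theta>\<^sub>i(w') \<noteq> 0\<close>; minimality of \<open>rk(w)\<close> gives \<open>rk(w) \<le> rk(w')\<close>. Taking
  \<open>w' = w a\<close> with \<open>h \<theta>\<^sub>i(a) \<noteq> 0\<close> shows that \<open>a\<close> acts injectively on \<open>Q\<cdot>w\<close> and that \<open>w a\<close>
  \<open>u\<close>-represents \<open>h \<theta>\<^sub>i(a)\<close>. If \<open>g \<theta>\<^sub>i(a) \<noteq> f \<theta>\<^sub>i(a)\<close>, one of them is nonzero, so \<open>a\<close> is injective on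
  \<open>Q\<cdot>w\<^sub>1\<close> or \<open>Q\<cdot>w\<^sub>2\<close> and \<open>w\<^sub>1a, w\<^sub>2a\<close> witness \<open>g \<theta>\<^sub>i(a) \<sigma>\<^sub>i f \<theta>\<^sub>i(a)\<close>.
\<close>

lemma act_Nil [simp]: "act \<delta> q [] = q"
  by (simp add: act_def)

lemma act_append: "act \<delta> q (x @ y) = act \<delta> (act \<delta> q x) y"
  by (simp add: act_def)

lemma act_less:
  assumes closed: "\<forall>q<n. \<forall>a\<in>\<Sigma>. \<delta> q a < n"
  shows "w \<in> lists \<Sigma> \<Longrightarrow> q < n \<Longrightarrow> act \<delta> q w < n"
proof (induction w arbitrary: q rule: rev_induct)
  case (snoc x xs)
  then show ?case using closed by (simp add: act_def)
qed simp

lemma img_append: "img n \<delta> (x @ y) = (\<lambda>q. act \<delta> q y) ` img n \<delta> x"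
  unfolding img_def by (auto simp: act_append image_image)

lemma finite_img [simp]: "finite (img n \<delta> w)"
  by (simp add: img_def)

lemma rk_append_le_left: "rk n \<delta> (x @ y) \<le> rk n \<delta> x"
  unfolding rk_def img_append by (rule card_image_le) simp

lemma rk_append_le_right:
  assumes closed: "\<forall>q<n. \<forall>a\<in>\<Sigma>. \<delta> q a < n" and x: "x \<in> lists \<Sigma>"
  shows "rk n \<delta> (x @ y) \<le> rk n \<delta> y"
proof -
  have "img n \<delta> (x @ y) \<subseteq> img n \<delta> y"
    unfolding img_def using act_less[OF closed x] by (auto simp: act_append)
  then show ?thesis
    unfolding rk_def by (rule card_mono[OF finite_img])
qed

lemma inj_on_img_of_rk_append_eq:
  "rk n \<delta> (w @ a) = rk n \<delta> w \<Longrightarrow> inj_on (\<lambda>q. act \<delta> q a) (img n \<delta> w)"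
  unfolding rk_def img_append by (rule eq_card_imp_inj_on[OF finite_img])

lemma card_Int_le_card_image_Int:
  assumes "finite A" "finite B" and "inj_on F A \<or> inj_on F B"
  shows "card (A \<inter> B) \<le> card (F ` A \<inter> F ` B)"
proof -
  have "inj_on F (A \<inter> B)"
    using assms(3) by (meson inf_le1 inf_le2 inj_on_subset)
  then have "card (A \<inter> B) = card (F ` (A \<inter> B))"
    by (simp add: card_image)
  also have "\<dots> \<le> card (F ` A \<inter> F ` B)"
    by (rule card_mono) (use assms(1,2) in auto)
  finally show ?thesis .
qed

lemma factors_subset_lists: "u \<in> lists \<Sigma> \<Longrightarrow> factors \<Sigma> u \<subseteq> lists \<Sigma>"
  unfolding factors_def by auto

lemma append_factors_append:
  assumes "w \<in> factors \<Sigma> u" "p \<in> lists \<Sigma>" "q \<in> lists \<Sigma>"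
  shows "p @ w @ q \<in> factors \<Sigma> u"
proof -
  obtain x y where "w = x @ u @ y" "x \<in> lists \<Sigma>" "y \<in> lists \<Sigma>"
    using assms(1) unfolding factors_def by blast
  then have "p @ w @ q = (p @ x) @ u @ (y @ q)" "p @ x \<in> lists \<Sigma>" "y @ q \<in> lists \<Sigma>"
    using assms(2,3) by auto
  then show ?thesis
    unfolding factors_def by blast
qed

lemma rho_Nil: "rho n \<delta> [] = 1\<^sub>m (n - 1)"
  by (rule eq_matI) (auto simp: rho_def)

text \<open>Only \<open>X (n - 1) = 0\<close> matters: state \<open>n - 1\<close> has no basis vector, as \<open>b\<^sub>n = q\<^sub>n - q\<^sub>n = 0\<close>.\<close>

lemma sum_indicator_mult:
  fixes X :: "nat \<Rightarrow> complex"
  assumes "p < n" "X (n - 1) = 0"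
  shows "(\<Sum>m\<in>{0..<n - 1}. (if p = m then 1 else 0) * X m) = X p"
proof (cases "p = n - 1")
  case False
  then have "p < n - 1" using assms(1) by simp
  have "(\<Sum>m\<in>{0..<n - 1}. (if p = m then 1 else 0) * X m) = (\<Sum>m\<in>{0..<n - 1}. if p = m then X m else 0)"
    by (rule sum.cong) auto
  with \<open>p < n - 1\<close> show ?thesis
    by (simp add: sum.delta)
qed (use assms in simp)

lemma rho_append:
  assumes closed: "\<forall>q<n. \<forall>a\<in>\<Sigma>. \<delta> q a < n" and "0 < n" and x: "x \<in> lists \<Sigma>"
  shows "rho n \<delta> (x @ y) = rho n \<delta> x * rho n \<delta> y"
proof (rule eq_matI)
  fix j l assume "j < dim_row (rho n \<delta> x * rho n \<delta> y)" "l < dim_col (rho n \<delta> x * rho n \<delta> y)"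
  then have j: "j < n - 1" and l: "l < n - 1" by (auto simp: rho_def)
  define X where "X m = (if act \<delta> m y = l then 1 else 0) - (if act \<delta> (n - 1) y = l then 1 else (0::complex))" for m
  define p where "p = act \<delta> j x"
  define p' where "p' = act \<delta> (n - 1) x"
  have p: "p < n" "p' < n"
    unfolding p_def p'_def using act_less[OF closed x] j \<open>0 < n\<close> by simp_all
  have X: "X (n - 1) = 0"
    by (simp add: X_def)
  have "(rho n \<delta> x * rho n \<delta> y) $$ (j, l) =
     (\<Sum>m\<in>{0..<n - 1}. ((if p = m then 1 else 0) - (if p' = m then 1 else 0)) * X m)"
    using j l by (simp add: rho_def scalar_prod_def p_def p'_def X_def)
  also have "\<dots> = (\<Sum>m\<in>{0..<n - 1}. (if p = m then 1 else 0) * X m)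
      - (\<Sum>m\<in>{0..<n - 1}. (if p' = m then 1 else 0) * X m)"
    by (simp add: left_diff_distrib sum_subtractf)
  also have "\<dots> = X p - X p'"
    using sum_indicator_mult[of p n X, OF p(1) X] sum_indicator_mult[of p' n X, OF p(2) X] by simp
  also have "\<dots> = rho n \<delta> (x @ y) $$ (j, l)"
    using j l by (simp add: rho_def X_def p_def p'_def act_append)
  finally show "rho n \<delta> (x @ y) $$ (j, l) = (rho n \<delta> x * rho n \<delta> y) $$ (j, l)" ..
qed (auto simp: rho_def)

lemma finite_rho_image:
  assumes closed: "\<forall>q<n. \<forall>a\<in>\<Sigma>. \<delta> q a < n"
  shows "finite (rho n \<delta> ` lists \<Sigma>)"
proof -
  define G :: "(nat \<Rightarrow> nat) \<Rightarrow> complex mat" where "G h = mat (n - 1) (n - 1)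
     (\<lambda>(j, l). (if h j = l then 1 else 0) - (if h (n - 1) = l then 1 else 0))" for h
  have "rho n \<delta> w = G (restrict (\<lambda>j. act \<delta> j w) {0..<n})" if "w \<in> lists \<Sigma>" for w
    by (rule eq_matI) (auto simp: rho_def G_def)
  moreover have "restrict (\<lambda>j. act \<delta> j w) {0..<n} \<in> PiE {0..<n} (\<lambda>_. {0..<n})"
    if "w \<in> lists \<Sigma>" for w
    using act_less[OF closed that] by auto
  ultimately have "rho n \<delta> ` lists \<Sigma> \<subseteq> G ` PiE {0..<n} (\<lambda>_. {0..<n})"
    by blast
  then show ?thesis
    by (rule finite_subset) (intro finite_imageI finite_PiE, auto)
qed

lemma mat_nonzero_entry:
  assumes "A \<in> carrier_mat m m" "A \<noteq> 0\<^sub>m m m"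
  shows "\<exists>p<m. \<exists>q<m. A $$ (p, q) \<noteq> 0"
proof (rule ccontr)
  assume "\<not> ?thesis"
  then have "A = 0\<^sub>m m m"
    using assms(1) by (intro eq_matI) auto
  with assms(2) show False ..
qed

text \<open>The matrix unit \<open>E\<^sub>q\<^sub>r\<close> picks out the nonzero entries \<open>A\<^sub>p\<^sub>q\<close> and \<open>B\<^sub>r\<^sub>s\<close>.\<close>

lemma mat_algebra_prime:
  fixes A B :: "'a::field mat"
  assumes A: "A \<in> carrier_mat m m" "A \<noteq> 0\<^sub>m m m" and B: "B \<in> carrier_mat m m" "B \<noteq> 0\<^sub>m m m"
  shows "\<exists>M\<in>carrier_mat m m. A * M * B \<noteq> 0\<^sub>m m m"
proof -
  obtain p q where pq: "p < m" "q < m" "A $$ (p, q) \<noteq> 0"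
    using mat_nonzero_entry[OF A] by blast
  obtain r s where rs: "r < m" "s < m" "B $$ (r, s) \<noteq> 0"
    using mat_nonzero_entry[OF B] by blast
  define M :: "'a mat" where "M = mat m m (\<lambda>(x, y). if x = q \<and> y = r then 1 else 0)"
  have M: "M \<in> carrier_mat m m"
    by (simp add: M_def)
  have AM: "(A * M) $$ (p, l) = (if l = r then A $$ (p, q) else 0)" if "l < m" for l
  proof -
    have "(A * M) $$ (p, l) = (\<Sum>j\<in>{0..<m}. A $$ (p, j) * (if j = q \<and> l = r then 1 else 0))"
      using A(1) pq that by (simp add: M_def scalar_prod_def)
    also have "\<dots> = (\<Sum>j\<in>{0..<m}. if j = q then (if l = r then A $$ (p, q) else 0) else 0)"
      by (rule sum.cong) auto
    also have "\<dots> = (if l = r then A $$ (p, q) else 0)"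
      using pq by (simp add: sum.delta)
    finally show ?thesis .
  qed
  have "dim_row (A * M) = m" "dim_col (A * M) = m"
    using A(1) M by simp_all
  then have "(A * M * B) $$ (p, s) = (\<Sum>l\<in>{0..<m}. (A * M) $$ (p, l) * B $$ (l, s))"
    using B(1) pq rs by (simp add: scalar_prod_def)
  also have "\<dots> = (\<Sum>l\<in>{0..<m}. if l = r then A $$ (p, q) * B $$ (r, s) else 0)"
    by (rule sum.cong) (auto simp: AM)
  also have "\<dots> = A $$ (p, q) * B $$ (r, s)"
    using rs by (simp add: sum.delta)
  finally have "(A * M * B) $$ (p, s) \<noteq> 0"
    using pq rs by simp
  then have "A * M * B \<noteq> 0\<^sub>m m m"
    using pq rs by auto
  with M show ?thesis ..
qed

lemma monoid_idealD:
  assumes "monoid_ideal S J"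
  shows "J \<subseteq> S" and "s \<in> S \<Longrightarrow> x \<in> J \<Longrightarrow> s * x \<in> J" and "s \<in> S \<Longrightarrow> x \<in> J \<Longrightarrow> x * s \<in> J"
  using assms unfolding monoid_ideal_def by blast+

lemma monoid_ideal_Int:
  "monoid_ideal S J1 \<Longrightarrow> monoid_ideal S J2 \<Longrightarrow> J1 \<inter> J2 \<noteq> {} \<Longrightarrow> monoid_ideal S (J1 \<inter> J2)"
  unfolding monoid_ideal_def by blast

lemma zero_minimal_idealD:
  assumes "zero_minimal_ideal S z I"
  shows "monoid_ideal S I" and "\<exists>x\<in>I. x \<noteq> z"
    and "monoid_ideal S J \<Longrightarrow> J \<subseteq> I \<Longrightarrow> J \<noteq> {z} \<Longrightarrow> J = I"
proof -
  show I: "monoid_ideal S I"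
    using assms by (simp add: zero_minimal_ideal_def)
  have "I \<noteq> {}" "I \<noteq> {z}"
    using I assms by (simp_all add: monoid_ideal_def zero_minimal_ideal_def)
  then show "\<exists>x\<in>I. x \<noteq> z"
    by (auto simp: subset_singleton_iff dest!: subset_singletonD[of I z])
  show "monoid_ideal S J \<Longrightarrow> J \<subseteq> I \<Longrightarrow> J \<noteq> {z} \<Longrightarrow> J = I"
    using assms unfolding zero_minimal_ideal_def by blast
qed

lemma zero_minimal_ideal_exists:
  assumes "finite S" "monoid_ideal S S" "S \<noteq> {z}"
  shows "\<exists>I. zero_minimal_ideal S z I"
proof -
  define F where "F = {J. monoid_ideal S J \<and> J \<noteq> {z}}"
  have "finite F"
    by (rule finite_subset[of _ "Pow S"]) (use assms(1) monoid_idealD(1) in \<open>auto simp: F_def\<close>)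
  moreover have "S \<in> F"
    using assms(2,3) by (simp add: F_def)
  ultimately obtain I where "I \<in> F" "\<forall>J\<in>F. J \<subseteq> I \<longrightarrow> I = J"
    using finite_has_minimal by blast
  then have "zero_minimal_ideal S z I"
    unfolding zero_minimal_ideal_def F_def by blast
  then show ?thesis ..
qed

lemma zero_minimal_ideal_unique:
  assumes meet: "\<And>J1 J2. monoid_ideal S J1 \<Longrightarrow> monoid_ideal S J2 \<Longrightarrow>
      \<exists>x\<in>J1. x \<noteq> z \<Longrightarrow> \<exists>x\<in>J2. x \<noteq> z \<Longrightarrow> \<exists>x\<in>J1 \<inter> J2. x \<noteq> z"
    and I1: "zero_minimal_ideal S z I1" and I2: "zero_minimal_ideal S z I2"
  shows "I1 = I2"
proof -
  obtain x where x: "x \<in> I1 \<inter> I2" "x \<noteq> z"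
    using meet zero_minimal_idealD(1,2)[OF I1] zero_minimal_idealD(1,2)[OF I2] by blast
  then have "monoid_ideal S (I1 \<inter> I2)" "I1 \<inter> I2 \<noteq> {z}"
    using monoid_ideal_Int zero_minimal_idealD(1)[OF I1] zero_minimal_idealD(1)[OF I2] by blast+
  then show ?thesis
    using zero_minimal_idealD(3)[OF I1] zero_minimal_idealD(3)[OF I2] by blast
qed

locale mat_monoid =
  fixes N :: nat and S :: "'a::semiring_1 mat set"
  assumes carrier: "S \<subseteq> carrier_mat N N"
    and one_mem: "1\<^sub>m N \<in> S"
    and mult_mem: "x \<in> S \<Longrightarrow> y \<in> S \<Longrightarrow> x * y \<in> S"
begin

lemma assoc: "x \<in> S \<Longrightarrow> y \<in> S \<Longrightarrow> z \<in> S \<Longrightarrow> x * y * z = x * (y * z)"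
  using carrier by (blast intro: assoc_mult_mat)

lemma monoid_ideal_self: "monoid_ideal S S"
  unfolding monoid_ideal_def using one_mem mult_mem by blast

lemma monoid_ideal_generated:
  assumes "y \<in> S"
  shows "monoid_ideal S {a * y * b |a b. a \<in> S \<and> b \<in> S}"
proof -
  let ?J = "{a * y * b |a b. a \<in> S \<and> b \<in> S}"
  have "s * x \<in> ?J \<and> x * s \<in> ?J" if s: "s \<in> S" and "x \<in> ?J" for s x
  proof -
    obtain a b where ab: "a \<in> S" "b \<in> S" "x = a * y * b"
      using \<open>x \<in> ?J\<close> by blast
    have "s * x = (s * a) * y * b" "x * s = a * y * (b * s)"
      using ab assms s by (simp_all add: assoc mult_mem)
    then show ?thesis
      using ab s by (blast intro: mult_mem)
  qed
  moreover have "?J \<noteq> {}" "?J \<subseteq> S"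
    using assms one_mem mult_mem by blast+
  ultimately show ?thesis
    unfolding monoid_ideal_def by blast
qed

lemma zero_minimal_ideal_generated:
  assumes I: "zero_minimal_ideal S (0\<^sub>m N N) I" and y: "y \<in> I" "y \<noteq> 0\<^sub>m N N" and h: "h \<in> I"
  shows "\<exists>a\<in>S. \<exists>b\<in>S. h = a * y * b"
proof -
  have yS: "y \<in> S" "y \<in> carrier_mat N N"
    using y(1) monoid_idealD(1)[OF zero_minimal_idealD(1)[OF I]] carrier by auto
  then have "y \<in> {a * y * b |a b. a \<in> S \<and> b \<in> S}"
    using one_mem by (metis (mono_tags, lifting) left_mult_one_mat right_mult_one_mat mem_Collect_eq)
  moreover have "{a * y * b |a b. a \<in> S \<and> b \<in> S} \<subseteq> I"
    using y(1) monoid_idealD(2,3)[OF zero_minimal_idealD(1)[OF I]] by blast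
  ultimately have "{a * y * b |a b. a \<in> S \<and> b \<in> S} = I"
    using zero_minimal_idealD(3)[OF I monoid_ideal_generated[OF yS(1)]] y(2) by blast
  then show ?thesis
    using h by blast
qed

lemma ideals_meet_if_prime:
  assumes prime: "\<And>A B. A \<in> carrier_mat N N \<Longrightarrow> A \<noteq> 0\<^sub>m N N \<Longrightarrow>
      B \<in> carrier_mat N N \<Longrightarrow> B \<noteq> 0\<^sub>m N N \<Longrightarrow> \<exists>s\<in>S. A * s * B \<noteq> 0\<^sub>m N N"
    and J1: "monoid_ideal S J1" "x \<in> J1" "x \<noteq> 0\<^sub>m N N"
    and J2: "monoid_ideal S J2" "y \<in> J2" "y \<noteq> 0\<^sub>m N N"
  shows "\<exists>z\<in>J1 \<inter> J2. z \<noteq> 0\<^sub>m N N"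
proof -
  have xy: "x \<in> S" "y \<in> S"
    using J1(2) J2(2) monoid_idealD(1)[OF J1(1)] monoid_idealD(1)[OF J2(1)] by auto
  then obtain s where s: "s \<in> S" "x * s * y \<noteq> 0\<^sub>m N N"
    using prime carrier J1(3) J2(3) by blast
  have "x * s * y \<in> J1"
    using J1 s(1) xy(2) monoid_idealD(3) by blast
  moreover have "x * (s * y) \<in> J2"
    using J2 s(1) xy(1) monoid_idealD(2) by blast
  ultimately show ?thesis
    using s xy by (auto simp: assoc)
qed

end

locale semisimple_component =
  fixes n k :: nat and \<Sigma> :: "'a set" and \<delta> :: "nat \<Rightarrow> 'a \<Rightarrow> nat"
    and ns :: "nat \<Rightarrow> nat" and \<Phi> :: "complex mat \<Rightarrow> nat \<Rightarrow> complex mat" and i :: nat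
  assumes closed: "\<forall>q<n. \<forall>a\<in>\<Sigma>. \<delta> q a < n" and n_pos: "0 < n"
    and wedderburn_artin: "wedderburn_artin (n - 1) (algR n \<Sigma> \<delta>) k ns \<Phi>" and i_less: "i < k"
begin

abbreviation "\<theta> \<equiv> theta n \<delta> \<Phi> i"
abbreviation "N \<equiv> ns i"
abbreviation "\<Theta> \<equiv> \<theta> ` lists \<Sigma>"
abbreviation "\<I> \<equiv> idealI \<Sigma> n \<delta> ns \<Phi> i"
abbreviation represents :: "'a list \<Rightarrow> 'a list \<Rightarrow> complex mat \<Rightarrow> bool" where
  "represents u w h \<equiv> u_represents \<Sigma> n \<delta> ns \<Phi> u i w h"

lemma Phi_carrier: "x \<in> algR n \<Sigma> \<delta> \<Longrightarrow> \<Phi> x i \<in> carrier_mat N N"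
  and Phi_add: "x \<in> algR n \<Sigma> \<delta> \<Longrightarrow> y \<in> algR n \<Sigma> \<delta> \<Longrightarrow> \<Phi> (x + y) i = \<Phi> x i + \<Phi> y i"
  and Phi_smult: "x \<in> algR n \<Sigma> \<delta> \<Longrightarrow> \<Phi> (c \<cdot>\<^sub>m x) i = c \<cdot>\<^sub>m \<Phi> x i"
  and Phi_mult: "x \<in> algR n \<Sigma> \<delta> \<Longrightarrow> y \<in> algR n \<Sigma> \<delta> \<Longrightarrow> \<Phi> (x * y) i = \<Phi> x i * \<Phi> y i"
  and Phi_one: "\<Phi> (1\<^sub>m (n - 1)) i = 1\<^sub>m N"
  and N_pos: "0 < N"
  and Phi_surj: "\<forall>j<k. F j \<in> carrier_mat (ns j) (ns j) \<Longrightarrow> \<exists>x\<in>algR n \<Sigma> \<delta>. \<forall>j<k. \<Phi> x j = F j"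
  using wedderburn_artin i_less by (simp_all add: wedderburn_artin_def)

lemma Phi_zero: "\<Phi> (0\<^sub>m (n - 1) (n - 1)) i = 0\<^sub>m N N"
proof -
  have "0\<^sub>m (n - 1) (n - 1) = (0::complex) \<cdot>\<^sub>m 1\<^sub>m (n - 1)"
    by (rule eq_matI) auto
  then have "\<Phi> (0\<^sub>m (n - 1) (n - 1)) i = 0 \<cdot>\<^sub>m \<Phi> (1\<^sub>m (n - 1)) i"
    using Phi_smult[of "1\<^sub>m (n - 1)"] by (simp add: algR_def gen_alg.one)
  also have "\<dots> = 0 \<cdot>\<^sub>m 1\<^sub>m N"
    by (simp only: Phi_one)
  also have "\<dots> = 0\<^sub>m N N"
    by (rule eq_matI) auto
  finally show ?thesis .
qed

lemma rho_mem_algR: "w \<in> lists \<Sigma> \<Longrightarrow> rho n \<delta> w \<in> algR n \<Sigma> \<delta>"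
  unfolding algR_def by (rule gen_alg.gen) auto

lemma theta_carrier [simp]: "w \<in> lists \<Sigma> \<Longrightarrow> \<theta> w \<in> carrier_mat N N"
  unfolding theta_def by (rule Phi_carrier[OF rho_mem_algR])

lemma theta_Nil: "\<theta> [] = 1\<^sub>m N"
  unfolding theta_def rho_Nil by (rule Phi_one)

lemma theta_append: "x \<in> lists \<Sigma> \<Longrightarrow> y \<in> lists \<Sigma> \<Longrightarrow> \<theta> (x @ y) = \<theta> x * \<theta> y"
  unfolding theta_def rho_append[OF closed n_pos] by (intro Phi_mult rho_mem_algR)

sublocale mat_monoid N \<Theta>
proof
  show "\<Theta> \<subseteq> carrier_mat N N"
    using theta_carrier by blast
  show "1\<^sub>m N \<in> \<Theta>"
    using theta_Nil by (metis lists.Nil imageI)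
  show "x * y \<in> \<Theta>" if xy: "x \<in> \<Theta>" "y \<in> \<Theta>" for x y
  proof -
    obtain s t where "s \<in> lists \<Sigma>" "t \<in> lists \<Sigma>" "x = \<theta> s" "y = \<theta> t"
      using xy by blast
    then show ?thesis
      by (metis append_in_lists_conv imageI theta_append)
  qed
qed

lemma theta_mem [simp]: "w \<in> lists \<Sigma> \<Longrightarrow> \<theta> w \<in> \<Theta>"
  by (rule imageI)

lemma finite_theta_monoid: "finite \<Theta>"
proof -
  have "\<Theta> = (\<lambda>x. \<Phi> x i) ` rho n \<delta> ` lists \<Sigma>"
    by (auto simp: theta_def)
  then show ?thesis
    using finite_rho_image[OF closed] by simp
qed

text \<open>A consequence of \<open>\<Theta>\<close> linearly spanning \<open>\<Phi>(R)\<close>, as \<open>R\<close> is generated by the \<open>\<rho>(w)\<close>.\<close>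

lemma annihilator_theta_monoid:
  assumes "x \<in> algR n \<Sigma> \<delta>"
  shows "A \<in> carrier_mat N N \<Longrightarrow> C \<in> carrier_mat N N \<Longrightarrow>
     (\<forall>s\<in>lists \<Sigma>. A * \<theta> s * C = 0\<^sub>m N N) \<Longrightarrow> A * \<Phi> x i * C = 0\<^sub>m N N"
  using assms unfolding algR_def
proof (induction x arbitrary: A C rule: gen_alg.induct)
  case (gen x)
  then show ?case by (auto simp: theta_def)
next
  case zero
  then show ?case using Phi_zero by simp
next
  case one
  then show ?case using Phi_one theta_Nil by (metis lists.Nil)
next
  case (add x y)
  then have "\<Phi> x i \<in> carrier_mat N N" "\<Phi> y i \<in> carrier_mat N N"
    using Phi_carrier unfolding algR_def by auto
  with add show ?case
    by (simp add: Phi_add[unfolded algR_def] mult_add_distrib_mat add_mult_distrib_mat[of _ N N])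
next
  case (smult x c)
  then have "\<Phi> x i \<in> carrier_mat N N"
    using Phi_carrier unfolding algR_def by auto
  with smult show ?case
    by (simp add: Phi_smult[unfolded algR_def] mult_smult_distrib[of _ N N] mult_smult_assoc_mat[of _ N N])
next
  case (mult x y)
  have c: "\<Phi> x i \<in> carrier_mat N N" "\<Phi> y i \<in> carrier_mat N N"
    using mult.hyps Phi_carrier unfolding algR_def by auto
  have "A * \<theta> s * \<Phi> y i * C = 0\<^sub>m N N" if s: "s \<in> lists \<Sigma>" for s
  proof (rule mult.IH(2))
    show "\<forall>t\<in>lists \<Sigma>. A * \<theta> s * \<theta> t * C = 0\<^sub>m N N"
      using mult.prems s by (simp add: assoc_mult_mat[of A N N _ N _ N] flip: theta_append)
  qed (use mult.prems s in auto)
  then have "A * \<Phi> x i * (\<Phi> y i * C) = 0\<^sub>m N N"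
    using mult.prems c by (intro mult.IH(1)) (auto simp: assoc_mult_mat[of "A * \<theta> _" N N _ N _ N])
  then show ?case
    using mult.hyps mult.prems c by (simp add: Phi_mult[unfolded algR_def] assoc_mult_mat[of A N N _ N _ N])
qed

lemma theta_monoid_prime:
  assumes A: "A \<in> carrier_mat N N" "A \<noteq> 0\<^sub>m N N" and B: "B \<in> carrier_mat N N" "B \<noteq> 0\<^sub>m N N"
  shows "\<exists>s\<in>\<Theta>. A * s * B \<noteq> 0\<^sub>m N N"
proof -
  obtain M where M: "M \<in> carrier_mat N N" "A * M * B \<noteq> 0\<^sub>m N N"
    using mat_algebra_prime[OF A B] by blast
  have "\<forall>j<k. (if j = i then M else 0\<^sub>m (ns j) (ns j)) \<in> carrier_mat (ns j) (ns j)"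
    using M(1) by auto
  then obtain x where x: "x \<in> algR n \<Sigma> \<delta>" "\<forall>j<k. \<Phi> x j = (if j = i then M else 0\<^sub>m (ns j) (ns j))"
    using Phi_surj[of "\<lambda>j. if j = i then M else 0\<^sub>m (ns j) (ns j)"] by blast
  have "\<Phi> x i = M"
    using x(2) i_less by simp
  then have "\<not> (\<forall>s\<in>lists \<Sigma>. A * \<theta> s * B = 0\<^sub>m N N)"
    using annihilator_theta_monoid[OF x(1) A(1) B(1)] M(2) by auto
  then show ?thesis
    by auto
qed

lemma idealI_zero_minimal: "zero_minimal_ideal \<Theta> (0\<^sub>m N N) \<I>"
proof -
  have "1\<^sub>m N \<noteq> (0\<^sub>m N N :: complex mat)"
  proof
    assume "1\<^sub>m N = (0\<^sub>m N N :: complex mat)"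
    then have "(1\<^sub>m N :: complex mat) $$ (0, 0) = 0\<^sub>m N N $$ (0, 0)"
      by simp
    with N_pos show False
      by simp
  qed
  then have "\<Theta> \<noteq> {0\<^sub>m N N}"
    using one_mem by blast
  then have "\<exists>I. zero_minimal_ideal \<Theta> (0\<^sub>m N N) I"
    by (rule zero_minimal_ideal_exists[OF finite_theta_monoid monoid_ideal_self])
  moreover have "zero_minimal_ideal \<Theta> (0\<^sub>m N N) I1 \<Longrightarrow> zero_minimal_ideal \<Theta> (0\<^sub>m N N) I2 \<Longrightarrow> I1 = I2"
    for I1 I2
    by (rule zero_minimal_ideal_unique) (use ideals_meet_if_prime[OF theta_monoid_prime] in blast)
  ultimately have "\<exists>!I. zero_minimal_ideal \<Theta> (0\<^sub>m N N) I"
    by blast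
  then show ?thesis
    unfolding idealI_def by (rule theI')
qed

lemma idealI_right_mult: "h \<in> \<I> \<Longrightarrow> a \<in> lists \<Sigma> \<Longrightarrow> h * \<theta> a \<in> \<I>"
  using monoid_idealD(3)[OF zero_minimal_idealD(1)[OF idealI_zero_minimal]] by simp

text \<open>
  Since \<open>h \<noteq> 0\<close> generates \<open>\<I>\<close>, primeness gives a word \<open>p w s w' q\<close> with \<open>\<theta>\<close>-value \<open>h\<close>, whose rank
  lies between \<open>rk(w)\<close> (minimality) and \<open>rk(w')\<close>.
\<close>

lemma rk_represents_le:
  assumes u: "u \<in> lists \<Sigma>" and h: "h \<in> \<I>" "h \<noteq> 0\<^sub>m N N" and rep: "represents u w h"
    and w': "w' \<in> factors \<Sigma> u" "\<theta> w' \<noteq> 0\<^sub>m N N"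
  shows "rk n \<delta> w \<le> rk n \<delta> w'"
proof -
  have w: "w \<in> factors \<Sigma> u" "\<theta> w = h"
    and min: "\<And>w''. w'' \<in> factors \<Sigma> u \<Longrightarrow> \<theta> w'' = h \<Longrightarrow> rk n \<delta> w \<le> rk n \<delta> w''"
    using rep h(2) unfolding u_represents_def by auto
  have lists: "w \<in> lists \<Sigma>" "w' \<in> lists \<Sigma>"
    using w(1) w'(1) factors_subset_lists[OF u] by auto
  have "h \<in> carrier_mat N N"
    using w(2) theta_carrier[OF lists(1)] by simp
  then obtain s where s: "s \<in> lists \<Sigma>" "h * \<theta> s * \<theta> w' \<noteq> 0\<^sub>m N N"
    using theta_monoid_prime[of h "\<theta> w'"] h(2) w'(2) lists(2) by auto
  define m where "m = w @ s @ w'"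
  have m: "m \<in> lists \<Sigma>"
    using lists s(1) by (simp add: m_def)
  have "\<theta> m = \<theta> w * (\<theta> s * \<theta> w')"
    using lists s(1) by (simp add: m_def theta_append)
  also have "\<dots> = \<theta> w * \<theta> s * \<theta> w'"
    using lists s(1) by (simp add: assoc)
  also have "\<dots> = h * \<theta> s * \<theta> w'"
    by (simp only: w(2))
  finally have m_eq: "\<theta> m = h * \<theta> s * \<theta> w'" .
  have "\<theta> m \<in> \<I>"
    unfolding m_eq using h(1) s(1) lists(2) by (intro idealI_right_mult)
  moreover have "\<theta> m \<noteq> 0\<^sub>m N N"
    using s(2) m_eq by simp
  ultimately obtain a b where ab: "a \<in> \<Theta>" "b \<in> \<Theta>" "h = a * \<theta> m * b"
    using zero_minimal_ideal_generated[OF idealI_zero_minimal _ _ h(1)] by blast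
  obtain p q where pq: "p \<in> lists \<Sigma>" "q \<in> lists \<Sigma>" "h = \<theta> p * \<theta> m * \<theta> q"
    using ab by blast
  have "\<theta> ((p @ m) @ q) = h"
    using pq m by (simp only: theta_append append_in_lists_conv)
  then have "\<theta> ((p @ w @ s) @ w' @ q) = h"
    by (simp add: m_def)
  moreover have "(p @ w @ s) @ w' @ q \<in> factors \<Sigma> u"
    using append_factors_append[OF w'(1), of "p @ w @ s" q] pq lists s(1) by simp
  ultimately have "rk n \<delta> w \<le> rk n \<delta> ((p @ w @ s) @ w' @ q)"
    by (intro min)
  also have "\<dots> \<le> rk n \<delta> (w' @ q)"
    by (rule rk_append_le_right[OF closed]) (use pq lists s in simp)
  also have "\<dots> \<le> rk n \<delta> w'"
    by (rule rk_append_le_left)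
  finally show ?thesis .
qed

lemma represents_append:
  assumes u: "u \<in> lists \<Sigma>" and h: "h \<in> \<I>" and a: "a \<in> lists \<Sigma>" and rep: "represents u w h"
  shows "represents u (w @ a) (h * \<theta> a)"
    and "h * \<theta> a \<noteq> 0\<^sub>m N N \<Longrightarrow> rk n \<delta> (w @ a) = rk n \<delta> w"
proof -
  have w: "w \<in> factors \<Sigma> u" "\<theta> w = h" "w \<in> lists \<Sigma>"
    using rep factors_subset_lists[OF u] unfolding u_represents_def by auto
  have wa: "w @ a \<in> factors \<Sigma> u" "\<theta> (w @ a) = h * \<theta> a"
    using append_factors_append[OF w(1) lists.Nil a] w(2,3) a by (auto simp: theta_append)
  have le: "rk n \<delta> w \<le> rk n \<delta> w'"
    if "h * \<theta> a \<noteq> 0\<^sub>m N N" "w' \<in> factors \<Sigma> u" "\<theta> w' = h * \<theta> a" for w'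
  proof (rule rk_represents_le[OF u h _ rep that(2)])
    show "h \<noteq> 0\<^sub>m N N"
      using that(1) theta_carrier[OF a] by auto
  qed (use that in simp)
  have "rk n \<delta> (w @ a) \<le> rk n \<delta> w'"
    if "h * \<theta> a \<noteq> 0\<^sub>m N N" "w' \<in> factors \<Sigma> u" "\<theta> w' = h * \<theta> a" for w'
    using rk_append_le_left le[OF that] by (rule order_trans)
  with wa show "represents u (w @ a) (h * \<theta> a)"
    unfolding u_represents_def by blast
  show "rk n \<delta> (w @ a) = rk n \<delta> w" if "h * \<theta> a \<noteq> 0\<^sub>m N N"
    using le[OF that wa] rk_append_le_left[of n \<delta> w a] by simp
qed

end

theorem mainTheorem9:
  fixes n k :: nat and \<Sigma> :: "'a set" and \<delta> :: "nat \<Rightarrow> 'a \<Rightarrow> nat"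
    and ns :: "nat \<Rightarrow> nat" and \<Phi> :: "complex mat \<Rightarrow> nat \<Rightarrow> complex mat"
    and v u a :: "'a list" and i :: nat and g f :: "complex mat"
  assumes "synchronizing_automaton n \<Sigma> \<delta>"
    and "wedderburn_artin (n - 1) (algR n \<Sigma> \<delta>) k ns \<Phi>"
    and "v \<in> lists \<Sigma>"
    and "v_minimal \<Sigma> n \<delta> k ns \<Phi> v u"
    and "i \<in> supp n \<delta> k ns \<Phi> u"
    and "sigma_rel \<Sigma> n \<delta> ns \<Phi> u i g f"
    and "a \<in> lists \<Sigma>"
  shows "sigma_rel \<Sigma> n \<delta> ns \<Phi> u i (g * theta n \<delta> \<Phi> i a) (f * theta n \<delta> \<Phi> i a)"
proof -
  have closed: "\<forall>q<n. \<forall>a\<in>\<Sigma>. \<delta> q a < n" and "0 < n"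
    using assms(1) by (simp_all add: synchronizing_automaton_def)
  moreover have "i < k"
    using assms(5) by (simp add: supp_def)
  ultimately interpret semisimple_component n k \<Sigma> \<delta> ns \<Phi> i
    using assms(2) by (intro semisimple_component.intro)
  have u: "u \<in> lists \<Sigma>"
    using assms(4) factors_subset_lists[OF assms(3)] unfolding v_minimal_def by blast
  have I: "g \<in> \<I>" "f \<in> \<I>"
    using assms(6) unfolding sigma_rel_def by simp_all
  then have Ia: "g * \<theta> a \<in> \<I>" "f * \<theta> a \<in> \<I>"
    using assms(7) by (simp_all add: idealI_right_mult)
  show ?thesis
  proof (cases "g * \<theta> a = f * \<theta> a")
    case False
    then have "g \<noteq> f"
      by auto
    then obtain w1 w2 where rep: "represents u w1 g" "represents u w2 f"
      and card: "1 < card (img n \<delta> w1 \<inter> img n \<delta> w2)"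
      using assms(6) unfolding sigma_rel_def by blast
    have "g * \<theta> a \<noteq> 0\<^sub>m N N \<or> f * \<theta> a \<noteq> 0\<^sub>m N N"
      using False by auto
    then have "inj_on (\<lambda>q. act \<delta> q a) (img n \<delta> w1) \<or> inj_on (\<lambda>q. act \<delta> q a) (img n \<delta> w2)"
      using represents_append(2)[OF u I(1) assms(7) rep(1)]
        represents_append(2)[OF u I(2) assms(7) rep(2)] inj_on_img_of_rk_append_eq by blast
    then have "card (img n \<delta> w1 \<inter> img n \<delta> w2) \<le> card (img n \<delta> (w1 @ a) \<inter> img n \<delta> (w2 @ a))"
      unfolding img_append by (rule card_Int_le_card_image_Int[OF finite_img finite_img])
    with card have "1 < card (img n \<delta> (w1 @ a) \<inter> img n \<delta> (w2 @ a))"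
      by linarith
    moreover have "represents u (w1 @ a) (g * \<theta> a)" "represents u (w2 @ a) (f * \<theta> a)"
      by (intro represents_append(1)[OF u _ assms(7)] I rep)+
    ultimately show ?thesis
      unfolding sigma_rel_def using Ia by blast
  qed (simp add: sigma_rel_def Ia)
qed

end
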